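(* Let $h$ be a triangle center function whose locus over the 3-periodics of $E$ is an ellipse. Let $T_0$ be the 3-periodic with vertex $(a,0)$ and $T_{\pi/2}$ the 3-periodic with vertex $(0,b)$, and assume $X_h(T_0)$ and $X_h(T_{\pi/2})$ are defined. Then $X_h(T_0)=(\pm\alpha,0)$ and $X_h(T_{\pi/2})=(0,\pm\beta)$ for some $\alpha,\beta>0$, and the locus is the ellipse $x^2/\alpha^2+y^2/\beta^2=1$.
   Context: Fix real numbers $a>b>0$ and let $E$ be the ellipse $x^2/a^2+y^2/b^2=1$ (the elliptic billiard). A 3-periodic is a non-degenerate triangle $P_1P_2P_3$ with all vertices on $E$ such that at each vertex $P_j$ the normal line to $E$ at $P_j$ bisects the interior angle of the triangle at $P_j$. Every point of $E$ is a vertex of exactly one 3-periodic. For a triangle $P_1P_2P_3$ let $s_1=|P_2P_3|$, $s_2=|P_3P_1|$, $s_3=|P_1P_2|$. A triangle center function is a function $h(x,y,z)$ that is homogeneous and bisymmetric ($h(x,y,z)=h(x,z,y)$). The associated triangle center is $X_h=\dfrac{p s_1P_1+q s_2P_2+r s_3P_3}{p s_1+q s_2+r s_3}$ with $p=h(s_1,s_2,s_3)$, $q=h(s_2,s_3,s_1)$, $r=h(s_3,s_1,s_2)$. The locus of $X_h$ is the set of points $X_h(T)$ as $T$ ranges over all 3-periodics for which $X_h(T)$ is defined. *)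

theory Defs
  imports "HOL-Analysis.Analysis"
begin

type_synonym pt = "real \<times> real"

definition on_ellipse :: "real \<Rightarrow> real \<Rightarrow> pt \<Rightarrow> bool" where
  "on_ellipse a b P \<longleftrightarrow> (fst P)\<^sup>2 / a\<^sup>2 + (snd P)\<^sup>2 / b\<^sup>2 = 1"

definition cross :: "pt \<Rightarrow> pt \<Rightarrow> real" where
  "cross u v = fst u * snd v - snd u * fst v"

definition edist :: "pt \<Rightarrow> pt \<Rightarrow> real" where
  "edist P Q = sqrt ((fst P - fst Q)\<^sup>2 + (snd P - snd Q)\<^sup>2)"

definition unitv :: "pt \<Rightarrow> pt \<Rightarrow> pt" where
  "unitv P Q = ((fst Q - fst P) / edist P Q, (snd Q - snd P) / edist P Q)"

(* normal vector of the ellipse x^2/a^2 + y^2/b^2 = 1 at P (gradient direction) *)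
definition normal_vec :: "real \<Rightarrow> real \<Rightarrow> pt \<Rightarrow> pt" where
  "normal_vec a b P = (fst P / a\<^sup>2, snd P / b\<^sup>2)"

(* the normal line at P bisects the interior angle of triangle P Q R at P:
   the internal bisector direction (sum of unit vectors towards Q and R)
   is parallel to the normal vector *)
definition normal_bisects :: "real \<Rightarrow> real \<Rightarrow> pt \<Rightarrow> pt \<Rightarrow> pt \<Rightarrow> bool" where
  "normal_bisects a b P Q R \<longleftrightarrow>
     cross (fst (unitv P Q) + fst (unitv P R), snd (unitv P Q) + snd (unitv P R)) (normal_vec a b P) = 0"

definition nondegenerate :: "pt \<Rightarrow> pt \<Rightarrow> pt \<Rightarrow> bool" where
  "nondegenerate P1 P2 P3 \<longleftrightarrow>
     cross (fst P2 - fst P1, snd P2 - snd P1) (fst P3 - fst P1, snd P3 - snd P1) \<noteq> 0"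

definition periodic3 :: "real \<Rightarrow> real \<Rightarrow> pt \<Rightarrow> pt \<Rightarrow> pt \<Rightarrow> bool" where
  "periodic3 a b P1 P2 P3 \<longleftrightarrow>
     nondegenerate P1 P2 P3 \<and>
     on_ellipse a b P1 \<and> on_ellipse a b P2 \<and> on_ellipse a b P3 \<and>
     normal_bisects a b P1 P2 P3 \<and> normal_bisects a b P2 P3 P1 \<and> normal_bisects a b P3 P1 P2"

(* triangle center function: homogeneous (of some real degree) and bisymmetric,
   on triples of positive reals (side lengths) *)
definition center_fun :: "(real \<Rightarrow> real \<Rightarrow> real \<Rightarrow> real) \<Rightarrow> bool" where
  "center_fun h \<longleftrightarrow>
     (\<exists>k::real. \<forall>t x y z. t > 0 \<longrightarrow> x > 0 \<longrightarrow> y > 0 \<longrightarrow> z > 0 \<longrightarrow>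
        h (t * x) (t * y) (t * z) = t powr k * h x y z) \<and>
     (\<forall>x y z. x > 0 \<longrightarrow> y > 0 \<longrightarrow> z > 0 \<longrightarrow> h x y z = h x z y)"

definition center_weights :: "(real \<Rightarrow> real \<Rightarrow> real \<Rightarrow> real) \<Rightarrow> pt \<Rightarrow> pt \<Rightarrow> pt \<Rightarrow> real \<times> real \<times> real" where
  "center_weights h P1 P2 P3 =
     (let s1 = edist P2 P3; s2 = edist P3 P1; s3 = edist P1 P2
      in (h s1 s2 s3 * s1, h s2 s3 s1 * s2, h s3 s1 s2 * s3))"

definition center_defined :: "(real \<Rightarrow> real \<Rightarrow> real \<Rightarrow> real) \<Rightarrow> pt \<Rightarrow> pt \<Rightarrow> pt \<Rightarrow> bool" where
  "center_defined h P1 P2 P3 \<longleftrightarrow>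
     (case center_weights h P1 P2 P3 of (w1, w2, w3) \<Rightarrow> w1 + w2 + w3 \<noteq> 0)"

definition center :: "(real \<Rightarrow> real \<Rightarrow> real \<Rightarrow> real) \<Rightarrow> pt \<Rightarrow> pt \<Rightarrow> pt \<Rightarrow> pt" where
  "center h P1 P2 P3 =
     (case center_weights h P1 P2 P3 of (w1, w2, w3) \<Rightarrow>
        ((w1 * fst P1 + w2 * fst P2 + w3 * fst P3) / (w1 + w2 + w3),
         (w1 * snd P1 + w2 * snd P2 + w3 * snd P3) / (w1 + w2 + w3)))"

definition locus :: "real \<Rightarrow> real \<Rightarrow> (real \<Rightarrow> real \<Rightarrow> real \<Rightarrow> real) \<Rightarrow> pt set" where
  "locus a b h = {center h P1 P2 P3 | P1 P2 P3.
                    periodic3 a b P1 P2 P3 \<and> center_defined h P1 P2 P3}"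

definition is_ellipse :: "pt set \<Rightarrow> bool" where
  "is_ellipse S \<longleftrightarrow>
     (\<exists>c1 c2 \<theta> A B. A > 0 \<and> B > 0 \<and>
        S = {(c1 + A * cos t * cos \<theta> - B * sin t * sin \<theta>,
              c2 + A * cos t * sin \<theta> + B * sin t * cos \<theta>) | t. True})"

end

theory Submission
  imports Defs
begin

(* The reflections in the two coordinate axes map 3-periodics to 3-periodics and commute with
   the centre construction, so the locus is symmetric about both axes. An ellipse with these
   symmetries is centred at the origin (its quadratic form vanishes at twice the centre, by the
   parallelogram law) and has no mixed term, so it is x^2/alpha^2 + y^2/beta^2 = 1.
   The 3-periodic with vertex (a,0) is symmetric about the x-axis: the normal there is
   horizontal, so its two sides leave (a,0) in mirror directions, and a line through (a,0)
   meets E in only one further point. Bisymmetry of h makes the centre invariant under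
   exchanging P2 and P3, so the centre lies on the x-axis, hence at (+-alpha, 0); the same
   holds for (0,b) and the y-axis. *)

lemma edist_eq_0_iff: "edist P Q = 0 \<longleftrightarrow> P = Q"
  by (simp add: edist_def prod_eq_iff sum_power2_eq_zero_iff)

lemma edist_pos:
  assumes "P \<noteq> Q"
  shows "edist P Q > 0"
proof -
  have "edist P Q \<ge> 0"
    by (simp add: edist_def)
  with assms edist_eq_0_iff[of P Q] show ?thesis
    by (simp add: order.strict_iff_order)
qed

lemma edist_commute: "edist P Q = edist Q P"
  by (simp add: edist_def power2_commute)

lemma edist_sq: "(edist P Q)\<^sup>2 = (fst Q - fst P)\<^sup>2 + (snd Q - snd P)\<^sup>2"
  unfolding edist_def by (simp add: power2_commute[of "fst P"] power2_commute[of "snd P"])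

lemma unitv_norm:
  assumes "P \<noteq> Q"
  shows "(fst (unitv P Q))\<^sup>2 + (snd (unitv P Q))\<^sup>2 = 1"
proof -
  have "(fst (unitv P Q))\<^sup>2 + (snd (unitv P Q))\<^sup>2
      = ((fst Q - fst P)\<^sup>2 + (snd Q - snd P)\<^sup>2) / (edist P Q)\<^sup>2"
    by (simp add: unitv_def power_divide add_divide_distrib)
  also have "\<dots> = 1"
    unfolding edist_sq[symmetric] using assms edist_eq_0_iff[of P Q] by simp
  finally show ?thesis .
qed

lemma point_from_unitv:
  assumes "P \<noteq> Q"
  shows "Q = (fst P + edist P Q * fst (unitv P Q), snd P + edist P Q * snd (unitv P Q))"
  using assms edist_eq_0_iff[of P Q] by (simp add: unitv_def prod_eq_iff)

lemma cross_unitv: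
  "cross (unitv P Q) (unitv P R)
     = cross (fst Q - fst P, snd Q - snd P) (fst R - fst P, snd R - snd P) / (edist P Q * edist P R)"
  by (simp add: cross_def unitv_def times_divide_times_eq flip: diff_divide_distrib)

lemma nondegenerate_distinct:
  assumes "nondegenerate P1 P2 P3"
  shows "P1 \<noteq> P2" "P2 \<noteq> P3" "P3 \<noteq> P1"
  using assms by (auto simp: nondegenerate_def cross_def)

lemma nondegenerate_cross_unitv:
  assumes "nondegenerate P1 P2 P3"
  shows "cross (unitv P1 P2) (unitv P1 P3) \<noteq> 0"
proof -
  have "edist P1 P2 \<noteq> 0" "edist P1 P3 \<noteq> 0"
    using nondegenerate_distinct[OF assms] edist_eq_0_iff by auto
  with assms show ?thesis
    by (simp add: cross_unitv nondegenerate_def)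
qed

definition reflect :: "real \<Rightarrow> real \<Rightarrow> pt \<Rightarrow> pt" where
  "reflect \<sigma> \<tau> P = (\<sigma> * fst P, \<tau> * snd P)"

context
  fixes \<sigma> \<tau> :: real
  assumes signs: "\<bar>\<sigma>\<bar> = 1" "\<bar>\<tau>\<bar> = 1"
begin

lemma sign_squares: "\<sigma>\<^sup>2 = 1" "\<tau>\<^sup>2 = 1"
  using signs power2_abs[of \<sigma>] power2_abs[of \<tau>] by simp_all

lemma edist_reflect [simp]: "edist (reflect \<sigma> \<tau> P) (reflect \<sigma> \<tau> Q) = edist P Q"
proof -
  have "(\<sigma> * x - \<sigma> * y)\<^sup>2 = (x - y)\<^sup>2" "(\<tau> * x - \<tau> * y)\<^sup>2 = (x - y)\<^sup>2" for x y
    using sign_squares by (simp_all add: right_diff_distrib[symmetric] power_mult_distrib)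
  then show ?thesis by (simp add: edist_def reflect_def)
qed

lemma unitv_reflect: "unitv (reflect \<sigma> \<tau> P) (reflect \<sigma> \<tau> Q) = reflect \<sigma> \<tau> (unitv P Q)"
  unfolding unitv_def edist_reflect by (simp add: reflect_def algebra_simps)

lemma cross_reflect: "cross (reflect \<sigma> \<tau> u) (reflect \<sigma> \<tau> v) = \<sigma> * \<tau> * cross u v"
  by (simp add: cross_def reflect_def algebra_simps)

lemma signs_nonzero: "\<sigma> \<noteq> 0" "\<tau> \<noteq> 0"
  using signs by auto

lemma reflect_reflect: "reflect \<sigma> \<tau> (reflect \<sigma> \<tau> P) = P"
  by (simp add: reflect_def mult.assoc[symmetric] power2_eq_square[symmetric] sign_squares)

lemma on_ellipse_reflect: "on_ellipse a b (reflect \<sigma> \<tau> P) \<longleftrightarrow> on_ellipse a b P"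
  using sign_squares by (simp add: on_ellipse_def reflect_def power_mult_distrib)

lemma normal_vec_reflect: "normal_vec a b (reflect \<sigma> \<tau> P) = reflect \<sigma> \<tau> (normal_vec a b P)"
  by (simp add: normal_vec_def reflect_def)

lemma normal_bisects_reflect:
  "normal_bisects a b (reflect \<sigma> \<tau> P) (reflect \<sigma> \<tau> Q) (reflect \<sigma> \<tau> R)
     \<longleftrightarrow> normal_bisects a b P Q R"
proof -
  have "(fst (unitv (reflect \<sigma> \<tau> P) (reflect \<sigma> \<tau> Q)) + fst (unitv (reflect \<sigma> \<tau> P) (reflect \<sigma> \<tau> R)),
         snd (unitv (reflect \<sigma> \<tau> P) (reflect \<sigma> \<tau> Q)) + snd (unitv (reflect \<sigma> \<tau> P) (reflect \<sigma> \<tau> R)))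
      = reflect \<sigma> \<tau> (fst (unitv P Q) + fst (unitv P R), snd (unitv P Q) + snd (unitv P R))"
    by (simp only: unitv_reflect) (simp add: reflect_def distrib_left)
  then show ?thesis
    by (simp add: normal_bisects_def normal_vec_reflect cross_reflect signs_nonzero)
qed

lemma nondegenerate_reflect:
  "nondegenerate (reflect \<sigma> \<tau> P1) (reflect \<sigma> \<tau> P2) (reflect \<sigma> \<tau> P3)
     \<longleftrightarrow> nondegenerate P1 P2 P3"
proof -
  have "(fst (reflect \<sigma> \<tau> Q) - fst (reflect \<sigma> \<tau> P), snd (reflect \<sigma> \<tau> Q) - snd (reflect \<sigma> \<tau> P))
      = reflect \<sigma> \<tau> (fst Q - fst P, snd Q - snd P)" for P Q
    by (simp add: reflect_def right_diff_distrib)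
  then show ?thesis
    by (simp add: nondegenerate_def cross_reflect signs_nonzero)
qed

lemma periodic3_reflect:
  "periodic3 a b P1 P2 P3 \<Longrightarrow> periodic3 a b (reflect \<sigma> \<tau> P1) (reflect \<sigma> \<tau> P2) (reflect \<sigma> \<tau> P3)"
  by (simp add: periodic3_def normal_bisects_reflect nondegenerate_reflect on_ellipse_reflect)

lemma center_weights_reflect:
  "center_weights h (reflect \<sigma> \<tau> P1) (reflect \<sigma> \<tau> P2) (reflect \<sigma> \<tau> P3)
     = center_weights h P1 P2 P3"
  by (simp add: center_weights_def)

lemma center_reflect:
  "center h (reflect \<sigma> \<tau> P1) (reflect \<sigma> \<tau> P2) (reflect \<sigma> \<tau> P3)
     = reflect \<sigma> \<tau> (center h P1 P2 P3)"
proof -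
  obtain w1 w2 w3 where w: "center_weights h P1 P2 P3 = (w1, w2, w3)"
    by (metis prod.exhaust)
  have "w1 * (c * x1) + w2 * (c * x2) + w3 * (c * x3) = c * (w1 * x1 + w2 * x2 + w3 * x3)"
    for c x1 x2 x3 :: real
    by (simp add: algebra_simps)
  then show ?thesis
    unfolding center_def center_weights_reflect w by (simp add: reflect_def)
qed

lemma locus_reflect:
  assumes "p \<in> locus a b h"
  shows "reflect \<sigma> \<tau> p \<in> locus a b h"
proof -
  obtain P1 P2 P3 where "p = center h P1 P2 P3" "periodic3 a b P1 P2 P3" "center_defined h P1 P2 P3"
    using assms unfolding locus_def by blast
  then have "reflect \<sigma> \<tau> p = center h (reflect \<sigma> \<tau> P1) (reflect \<sigma> \<tau> P2) (reflect \<sigma> \<tau> P3)"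
    and "periodic3 a b (reflect \<sigma> \<tau> P1) (reflect \<sigma> \<tau> P2) (reflect \<sigma> \<tau> P3)"
    and "center_defined h (reflect \<sigma> \<tau> P1) (reflect \<sigma> \<tau> P2) (reflect \<sigma> \<tau> P3)"
    by (simp_all add: center_reflect periodic3_reflect center_defined_def center_weights_reflect)
  then show ?thesis
    unfolding locus_def by blast
qed

end

lemma edist_swap: "edist (prod.swap P) (prod.swap Q) = edist P Q"
  by (simp add: edist_def add.commute)

lemma unitv_swap: "unitv (prod.swap P) (prod.swap Q) = prod.swap (unitv P Q)"
  unfolding unitv_def edist_swap by simp

lemma cross_swap: "cross (prod.swap u) (prod.swap v) = - cross u v"
  by (simp add: cross_def)

lemma on_ellipse_swap: "on_ellipse b a (prod.swap P) \<longleftrightarrow> on_ellipse a b P"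
  by (simp add: on_ellipse_def add.commute)

lemma normal_bisects_swap:
  "normal_bisects b a (prod.swap P) (prod.swap Q) (prod.swap R) \<longleftrightarrow> normal_bisects a b P Q R"
  using cross_swap[of "(fst (unitv P Q) + fst (unitv P R), snd (unitv P Q) + snd (unitv P R))"
      "normal_vec a b P"]
  by (simp add: normal_bisects_def unitv_swap normal_vec_def)

lemma nondegenerate_swap:
  "nondegenerate (prod.swap P1) (prod.swap P2) (prod.swap P3) \<longleftrightarrow> nondegenerate P1 P2 P3"
  using cross_swap[of "(fst P2 - fst P1, snd P2 - snd P1)" "(fst P3 - fst P1, snd P3 - snd P1)"]
  by (simp add: nondegenerate_def)

lemma periodic3_swap:
  "periodic3 a b P1 P2 P3 \<Longrightarrow> periodic3 b a (prod.swap P1) (prod.swap P2) (prod.swap P3)"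
  by (simp add: periodic3_def on_ellipse_swap normal_bisects_swap nondegenerate_swap)

definition quad_form :: "real \<Rightarrow> real \<Rightarrow> real \<Rightarrow> real \<Rightarrow> real \<Rightarrow> real" where
  "quad_form p q r x y = p * x\<^sup>2 + 2 * q * x * y + r * y\<^sup>2"

lemma quad_form_pos:
  assumes "p > 0" "p * r > q\<^sup>2" "(x, y) \<noteq> (0, 0)"
  shows "quad_form p q r x y > 0"
proof -
  have "p * quad_form p q r x y = (p * x + q * y)\<^sup>2 + (p * r - q\<^sup>2) * y\<^sup>2"
    by (simp add: quad_form_def power2_eq_square algebra_simps)
  moreover have "(p * x + q * y)\<^sup>2 + (p * r - q\<^sup>2) * y\<^sup>2 > 0"
  proof (cases "y = 0")
    case True
    with assms show ?thesis by simp
  next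
    case False
    with assms show ?thesis by (simp add: add_nonneg_pos)
  qed
  ultimately show ?thesis
    using \<open>p > 0\<close> zero_less_mult_pos by metis
qed

lemma quad_form_parallelogram:
  "quad_form p q r (x + u) (y + v) + quad_form p q r (x - u) (y - v)
     = 2 * quad_form p q r x y + 2 * quad_form p q r u v"
  by (simp add: quad_form_def power2_eq_square algebra_simps)

lemma quad_form_scale: "quad_form p q r (t * x) (t * y) = t\<^sup>2 * quad_form p q r x y"
  unfolding quad_form_def power2_eq_square by algebra

lemma rotated_ellipse_parametrization:
  fixes A B c s x y :: real
  assumes "A > 0" "B > 0" "c\<^sup>2 + s\<^sup>2 = 1"
  shows "(\<exists>t. x = A * cos t * c - B * sin t * s \<and> y = A * cos t * s + B * sin t * c)
    \<longleftrightarrow> (x * c + y * s)\<^sup>2 / A\<^sup>2 + (- x * s + y * c)\<^sup>2 / B\<^sup>2 = 1"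
proof
  assume "\<exists>t. x = A * cos t * c - B * sin t * s \<and> y = A * cos t * s + B * sin t * c"
  then obtain t where x: "x = A * cos t * c - B * sin t * s"
    and y: "y = A * cos t * s + B * sin t * c"
    by blast
  have "x * c + y * s = A * cos t * (c\<^sup>2 + s\<^sup>2)" "- x * s + y * c = B * sin t * (c\<^sup>2 + s\<^sup>2)"
    unfolding x y power2_eq_square by (simp_all add: algebra_simps)
  with assms show "(x * c + y * s)\<^sup>2 / A\<^sup>2 + (- x * s + y * c)\<^sup>2 / B\<^sup>2 = 1"
    by (simp add: power_mult_distrib)
next
  assume "(x * c + y * s)\<^sup>2 / A\<^sup>2 + (- x * s + y * c)\<^sup>2 / B\<^sup>2 = 1"
  then have "((x * c + y * s) / A)\<^sup>2 + ((- x * s + y * c) / B)\<^sup>2 = 1"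
    by (simp add: power_divide)
  then obtain t where t: "cos t = (x * c + y * s) / A" "sin t = (- x * s + y * c) / B"
    using sincos_total_2pi by metis
  have "A * cos t * c - B * sin t * s = x * (c\<^sup>2 + s\<^sup>2)"
    "A * cos t * s + B * sin t * c = y * (c\<^sup>2 + s\<^sup>2)"
    using assms(1,2) by (simp_all add: t power2_eq_square field_simps)
  with assms(3) show "\<exists>t. x = A * cos t * c - B * sin t * s \<and> y = A * cos t * s + B * sin t * c"
    by auto
qed

lemma is_ellipse_quadratic:
  assumes "is_ellipse S"
  obtains c1 c2 p q r where "p > 0" "p * r > q\<^sup>2"
    and "S = {(x, y). quad_form p q r (x - c1) (y - c2) = 1}"
proof -
  obtain c1 c2 \<theta> A B where "A > 0" "B > 0" and S:
    "S = {(c1 + A * cos t * cos \<theta> - B * sin t * sin \<theta>,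
           c2 + A * cos t * sin \<theta> + B * sin t * cos \<theta>) | t. True}"
    using assms unfolding is_ellipse_def by blast
  define c s where "c = cos \<theta>" and "s = sin \<theta>"
  have cs: "c\<^sup>2 + s\<^sup>2 = 1"
    by (simp add: c_def s_def)
  define p q r where "p = c\<^sup>2 / A\<^sup>2 + s\<^sup>2 / B\<^sup>2" and "q = c * s * (1 / A\<^sup>2 - 1 / B\<^sup>2)"
    and "r = s\<^sup>2 / A\<^sup>2 + c\<^sup>2 / B\<^sup>2"
  have form: "quad_form p q r x y = (x * c + y * s)\<^sup>2 / A\<^sup>2 + (- x * s + y * c)\<^sup>2 / B\<^sup>2" for x y
    using \<open>A > 0\<close> \<open>B > 0\<close>
    by (simp add: quad_form_def p_def q_def r_def field_simps power2_eq_square)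
  have "c \<noteq> 0 \<or> s \<noteq> 0"
    using cs by auto
  then have "p > 0"
    using \<open>A > 0\<close> \<open>B > 0\<close> by (auto simp: p_def intro: add_pos_nonneg add_nonneg_pos)
  have "p * r - q\<^sup>2 = (c\<^sup>2 + s\<^sup>2)\<^sup>2 / (A\<^sup>2 * B\<^sup>2)"
    using \<open>A > 0\<close> \<open>B > 0\<close>
    by (simp add: p_def q_def r_def field_simps power2_eq_square)
  moreover have "(c\<^sup>2 + s\<^sup>2)\<^sup>2 / (A\<^sup>2 * B\<^sup>2) > 0"
    using \<open>A > 0\<close> \<open>B > 0\<close> cs by simp
  ultimately have "p * r > q\<^sup>2"
    by linarith
  have "S = {(x, y). quad_form p q r (x - c1) (y - c2) = 1}"
  proof -
    have "(x, y) \<in> S \<longleftrightarrow> quad_form p q r (x - c1) (y - c2) = 1" for x y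
      using rotated_ellipse_parametrization[OF \<open>A > 0\<close> \<open>B > 0\<close> cs, of "x - c1" "y - c2"]
      by (auto simp: S form c_def s_def algebra_simps)
    then show ?thesis by auto
  qed
  with \<open>p > 0\<close> \<open>p * r > q\<^sup>2\<close> that show ?thesis by blast
qed

lemma quad_form_level_set_center_eq_0:
  assumes "p > 0" "p * r > q\<^sup>2"
    and S: "S = {(x, y). quad_form p q r (x - c1) (y - c2) = 1}"
    and sym: "\<And>x y. (x, y) \<in> S \<Longrightarrow> (- x, - y) \<in> S"
  shows "c1 = 0" "c2 = 0"
proof -
  \<comment> \<open>The points c + (u, 0) and c - (u, 0) of S and their negatives force, by the
     parallelogram law, the form to vanish at -2c.\<close>
  define u where "u = 1 / sqrt p"
  have u: "quad_form p q r u 0 = 1"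
    using \<open>p > 0\<close> by (simp add: quad_form_def u_def power_divide)
  have "(c1 + u, c2) \<in> S" "(c1 - u, c2) \<in> S"
    using u by (simp_all add: S quad_form_def)
  then have "(- c1 - u, - c2) \<in> S" "(- c1 + u, - c2) \<in> S"
    using sym[of "c1 + u" c2] sym[of "c1 - u" c2] by simp_all
  then have "quad_form p q r (- 2 * c1 - u) (- 2 * c2 - 0) = 1"
    "quad_form p q r (- 2 * c1 + u) (- 2 * c2 + 0) = 1"
    by (simp_all add: S)
  with quad_form_parallelogram[of p q r "- 2 * c1" u "- 2 * c2" 0] u
  have "quad_form p q r (- 2 * c1) (- 2 * c2) = 0"
    by simp
  then have "(- 2 * c1, - 2 * c2) = (0, 0)"
    using quad_form_pos[OF \<open>p > 0\<close> \<open>p * r > q\<^sup>2\<close>] less_irrefl by metis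
  then show "c1 = 0" "c2 = 0"
    by simp_all
qed

lemma quad_form_level_set_mixed_coeff_eq_0:
  assumes "p > 0" "p * r > q\<^sup>2"
    and S: "S = {(x, y). quad_form p q r x y = 1}"
    and sym: "\<And>x y. (x, y) \<in> S \<Longrightarrow> (x, - y) \<in> S"
  shows "q = 0"
proof -
  define t where "t = 1 / sqrt (quad_form p q r 1 1)"
  have pos: "quad_form p q r 1 1 > 0"
    using quad_form_pos[OF assms(1,2)] by simp
  then have "t\<^sup>2 * quad_form p q r 1 1 = 1"
    by (simp add: t_def power_divide)
  then have "(t, t) \<in> S"
    using quad_form_scale[of p q r t 1 1] by (simp add: S)
  then have "quad_form p q r (t * 1) (t * - 1) = quad_form p q r (t * 1) (t * 1)"
    using sym by (simp add: S)
  then have "t\<^sup>2 * (4 * q) = 0"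
    unfolding quad_form_scale by (simp add: quad_form_def algebra_simps)
  moreover have "t\<^sup>2 > 0"
    using pos by (simp add: t_def)
  ultimately show "q = 0"
    by simp
qed

lemma axis_symmetric_ellipse_standard_form:
  assumes "is_ellipse S"
    and sym_x: "\<And>x y. (x, y) \<in> S \<Longrightarrow> (x, - y) \<in> S"
    and sym_y: "\<And>x y. (x, y) \<in> S \<Longrightarrow> (- x, y) \<in> S"
  obtains \<alpha> \<beta> where "\<alpha> > 0" "\<beta> > 0" "S = {(x, y). x\<^sup>2 / \<alpha>\<^sup>2 + y\<^sup>2 / \<beta>\<^sup>2 = 1}"
proof -
  obtain c1 c2 p q r where pd: "p > 0" "p * r > q\<^sup>2"
    and S: "S = {(x, y). quad_form p q r (x - c1) (y - c2) = 1}"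
    using is_ellipse_quadratic[OF assms(1)] by metis
  have "(- x, - y) \<in> S" if "(x, y) \<in> S" for x y
    using sym_y[OF sym_x[OF that]] by simp
  then have "c1 = 0" "c2 = 0"
    using quad_form_level_set_center_eq_0[OF pd S] by simp_all
  with S have S0: "S = {(x, y). quad_form p q r x y = 1}"
    by simp
  then have "q = 0"
    using quad_form_level_set_mixed_coeff_eq_0[OF pd S0 sym_x] by blast
  have "p * r > 0"
    using pd zero_le_power2[of q] by linarith
  then have "r > 0"
    using \<open>p > 0\<close> zero_less_mult_pos by blast
  define \<alpha> \<beta> where "\<alpha> = 1 / sqrt p" and "\<beta> = 1 / sqrt r"
  have "\<alpha> > 0" "\<beta> > 0"
    using \<open>p > 0\<close> \<open>r > 0\<close> by (simp_all add: \<alpha>_def \<beta>_def)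
  moreover have "x\<^sup>2 / \<alpha>\<^sup>2 + y\<^sup>2 / \<beta>\<^sup>2 = quad_form p q r x y" for x y
    using \<open>p > 0\<close> \<open>r > 0\<close> \<open>q = 0\<close>
    by (simp add: quad_form_def \<alpha>_def \<beta>_def power_divide)
  ultimately have "S = {(x, y). x\<^sup>2 / \<alpha>\<^sup>2 + y\<^sup>2 / \<beta>\<^sup>2 = 1}"
    by (simp add: S0)
  with \<open>\<alpha> > 0\<close> \<open>\<beta> > 0\<close> show ?thesis
    using that by blast
qed

lemma power2_div_power2_eq_1_iff: "\<alpha> > 0 \<Longrightarrow> x\<^sup>2 / \<alpha>\<^sup>2 = 1 \<longleftrightarrow> x = \<alpha> \<or> x = - \<alpha>"
  for x \<alpha> :: real
  by (auto simp: divide_eq_1_iff power2_eq_iff)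

lemma standard_ellipse_x_axis:
  fixes \<alpha> \<beta> :: real
  assumes "\<alpha> > 0" "p \<in> {(x, y). x\<^sup>2 / \<alpha>\<^sup>2 + y\<^sup>2 / \<beta>\<^sup>2 = 1}" "snd p = 0"
  shows "p = (\<alpha>, 0) \<or> p = (- \<alpha>, 0)"
  using assms power2_div_power2_eq_1_iff[OF assms(1), of "fst p"] by (cases p) auto

lemma standard_ellipse_y_axis:
  fixes \<alpha> \<beta> :: real
  assumes "\<beta> > 0" "p \<in> {(x, y). x\<^sup>2 / \<alpha>\<^sup>2 + y\<^sup>2 / \<beta>\<^sup>2 = 1}" "fst p = 0"
  shows "p = (0, \<beta>) \<or> p = (0, - \<beta>)"
  using assms power2_div_power2_eq_1_iff[OF assms(1), of "snd p"] by (cases p) auto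

lemma on_ellipse_line_through_vertex:
  assumes "a \<noteq> 0" "b \<noteq> 0" "(u, v) \<noteq> (0, 0)" "s \<noteq> 0" "t \<noteq> 0"
    and "on_ellipse a b (a + s * u, s * v)" "on_ellipse a b (a + t * u, t * v)"
  shows "s = t"
proof -
  define K where "K = u\<^sup>2 / a\<^sup>2 + v\<^sup>2 / b\<^sup>2"
  have "K > 0"
    using assms(1-3) by (auto simp: K_def intro: add_pos_nonneg add_nonneg_pos)
  have "on_ellipse a b (a + x * u, x * v) \<longleftrightarrow> x * (2 * u / a + x * K) = 0" for x
  proof -
    have "(a + x * u)\<^sup>2 / a\<^sup>2 + (x * v)\<^sup>2 / b\<^sup>2 = 1 + x * (2 * u / a + x * K)"
      using assms(1,2) unfolding K_def
      by (simp add: power2_sum power_mult_distrib add_divide_distrib power2_eq_square algebra_simps)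
    then show ?thesis
      by (simp add: on_ellipse_def)
  qed
  with assms(4-7) have "2 * u / a + s * K = 0" "2 * u / a + t * K = 0"
    by simp_all
  then have "s * K = t * K"
    by linarith
  with \<open>K > 0\<close> show "s = t"
    by simp
qed

lemma periodic3_at_vertex_unitv_mirror:
  assumes "a > 0" and per: "periodic3 a b (a, 0) P2 P3"
  shows "unitv (a, 0) P3 = reflect 1 (- 1) (unitv (a, 0) P2)"
proof -
  define u w where "u = unitv (a, 0) P2" and "w = unitv (a, 0) P3"
  have nd: "nondegenerate (a, 0) P2 P3"
    using per by (simp add: periodic3_def)
  then have "cross u w \<noteq> 0"
    unfolding u_def w_def by (rule nondegenerate_cross_unitv)
  have "(a, 0) \<noteq> P2" "(a, 0) \<noteq> P3"
    using nondegenerate_distinct[OF nd] by auto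
  then have norms: "(fst u)\<^sup>2 + (snd u)\<^sup>2 = 1" "(fst w)\<^sup>2 + (snd w)\<^sup>2 = 1"
    unfolding u_def w_def by (simp_all add: unitv_norm)
  \<comment> \<open>The normal at (a, 0) is horizontal.\<close>
  have "snd w = - snd u"
    using per \<open>a > 0\<close>
    by (simp add: periodic3_def normal_bisects_def cross_def normal_vec_def u_def w_def)
  moreover have "fst w \<noteq> - fst u"
    using \<open>cross u w \<noteq> 0\<close> \<open>snd w = - snd u\<close> by (auto simp: cross_def)
  moreover have "(fst w)\<^sup>2 = (fst u)\<^sup>2"
    using norms \<open>snd w = - snd u\<close> by simp
  ultimately show ?thesis
    unfolding u_def[symmetric] w_def[symmetric]
    by (auto simp: reflect_def power2_eq_iff prod_eq_iff)
qed

lemma periodic3_at_vertex_symmetric: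
  assumes "a > 0" "b > 0" and per: "periodic3 a b (a, 0) P2 P3"
  shows "P3 = reflect 1 (- 1) P2"
proof -
  define u d2 d3 where "u = unitv (a, 0) P2"
    and "d2 = edist (a, 0) P2" and "d3 = edist (a, 0) P3"
  have "nondegenerate (a, 0) P2 P3"
    using per by (simp add: periodic3_def)
  then have "(a, 0) \<noteq> P2" "(a, 0) \<noteq> P3"
    using nondegenerate_distinct by metis+
  have P2: "P2 = (a + d2 * fst u, d2 * snd u)"
    using point_from_unitv[OF \<open>(a, 0) \<noteq> P2\<close>] by (simp add: u_def d2_def)
  have "unitv (a, 0) P3 = reflect 1 (- 1) u"
    using periodic3_at_vertex_unitv_mirror[OF \<open>a > 0\<close> per] by (simp add: u_def)
  then have P3: "P3 = (a + d3 * fst u, - (d3 * snd u))"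
    using point_from_unitv[OF \<open>(a, 0) \<noteq> P3\<close>] by (simp add: d3_def reflect_def)
  have "d2 \<noteq> 0" "d3 \<noteq> 0"
    using \<open>(a, 0) \<noteq> P2\<close> \<open>(a, 0) \<noteq> P3\<close> edist_eq_0_iff unfolding d2_def d3_def by blast+
  have "(fst u, snd u) \<noteq> (0, 0)"
    using unitv_norm[OF \<open>(a, 0) \<noteq> P2\<close>] by (auto simp: u_def)
  have "on_ellipse a b (a + d2 * fst u, d2 * snd u)"
    using per by (simp add: periodic3_def P2[symmetric])
  moreover have "on_ellipse a b (a + d3 * fst u, d3 * snd u)"
    using per on_ellipse_reflect[of 1 "- 1" a b P3] by (simp add: periodic3_def P3 reflect_def)
  ultimately have "d2 = d3"
    using on_ellipse_line_through_vertex[of a b "fst u" "snd u" d2 d3] \<open>a > 0\<close> \<open>b > 0\<close>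
      \<open>d2 \<noteq> 0\<close> \<open>d3 \<noteq> 0\<close> \<open>(fst u, snd u) \<noteq> (0, 0)\<close>
    by blast
  then show ?thesis
    by (simp add: P2 P3 reflect_def)
qed

lemma periodic3_at_covertex_symmetric:
  assumes "a > 0" "b > 0" and "periodic3 a b (0, b) P2 P3"
  shows "P3 = reflect (- 1) 1 P2"
proof -
  have "periodic3 b a (b, 0) (prod.swap P2) (prod.swap P3)"
    using periodic3_swap[OF assms(3)] by simp
  then have "prod.swap P3 = reflect 1 (- 1) (prod.swap P2)"
    using periodic3_at_vertex_symmetric \<open>a > 0\<close> \<open>b > 0\<close> by blast
  then show ?thesis
    by (simp add: reflect_def prod_eq_iff)
qed

lemma center_exchange:
  assumes "center_fun h" and "nondegenerate P1 P2 P3"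
  shows "center h P1 P3 P2 = center h P1 P2 P3"
proof -
  define s1 s2 s3 where "s1 = edist P2 P3" and "s2 = edist P3 P1" and "s3 = edist P1 P2"
  have "s1 > 0" "s2 > 0" "s3 > 0"
    using nondegenerate_distinct[OF assms(2)] edist_pos by (simp_all add: s1_def s2_def s3_def)
  then have bisym: "h s1 s3 s2 = h s1 s2 s3" "h s3 s2 s1 = h s3 s1 s2" "h s2 s1 s3 = h s2 s3 s1"
    using assms(1) by (simp_all add: center_fun_def)
  have "center_weights h P1 P3 P2 = (h s1 s3 s2 * s1, h s3 s2 s1 * s3, h s2 s1 s3 * s2)"
    unfolding center_weights_def Let_def s1_def s2_def s3_def
    by (simp add: edist_commute[of P3 P2] edist_commute[of P2 P1] edist_commute[of P1 P3])
  moreover have "center_weights h P1 P2 P3 = (h s1 s2 s3 * s1, h s2 s3 s1 * s2, h s3 s1 s2 * s3)"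
    by (simp add: center_weights_def Let_def s1_def s2_def s3_def)
  ultimately show ?thesis
    by (simp add: center_def bisym algebra_simps)
qed

lemma center_mirror_symmetric_triangle:
  assumes "\<bar>\<sigma>\<bar> = 1" "\<bar>\<tau>\<bar> = 1" and "center_fun h" and "nondegenerate P1 P2 P3"
    and "reflect \<sigma> \<tau> P1 = P1" and "reflect \<sigma> \<tau> P2 = P3"
  shows "reflect \<sigma> \<tau> (center h P1 P2 P3) = center h P1 P2 P3"
proof -
  have "reflect \<sigma> \<tau> P3 = P2"
    using reflect_reflect[OF assms(1,2)] assms(6) by metis
  then have "reflect \<sigma> \<tau> (center h P1 P2 P3) = center h P1 P3 P2"
    using center_reflect[OF assms(1,2), of h P1 P2 P3] assms(5,6) by simp
  also have "\<dots> = center h P1 P2 P3"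
    using center_exchange assms(3,4) .
  finally show ?thesis .
qed

lemma center_at_vertex_on_axis:
  assumes "a > 0" "b > 0" "center_fun h" "periodic3 a b (a, 0) P2 P3"
  shows "snd (center h (a, 0) P2 P3) = 0"
proof -
  have "reflect 1 (- 1) (center h (a, 0) P2 P3) = center h (a, 0) P2 P3"
    using assms periodic3_at_vertex_symmetric[OF assms(1,2,4)]
    by (intro center_mirror_symmetric_triangle) (auto simp: periodic3_def reflect_def)
  then show ?thesis
    by (simp add: reflect_def prod_eq_iff)
qed

lemma center_at_covertex_on_axis:
  assumes "a > 0" "b > 0" "center_fun h" "periodic3 a b (0, b) P2 P3"
  shows "fst (center h (0, b) P2 P3) = 0"
proof -
  have "reflect (- 1) 1 (center h (0, b) P2 P3) = center h (0, b) P2 P3"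
    using assms periodic3_at_covertex_symmetric[OF assms(1,2,4)]
    by (intro center_mirror_symmetric_triangle) (auto simp: periodic3_def reflect_def)
  then show ?thesis
    by (simp add: reflect_def prod_eq_iff)
qed

lemma center_in_locus:
  "periodic3 a b P1 P2 P3 \<Longrightarrow> center_defined h P1 P2 P3 \<Longrightarrow> center h P1 P2 P3 \<in> locus a b h"
  unfolding locus_def by blast

lemma locus_axis_symmetric:
  assumes "(x, y) \<in> locus a b h"
  shows "(x, - y) \<in> locus a b h" "(- x, y) \<in> locus a b h"
  using locus_reflect[of 1 "- 1", OF _ _ assms] locus_reflect[of "- 1" 1, OF _ _ assms]
  by (simp_all add: reflect_def)

theorem mainTheorem5:
  fixes a b :: real and h :: "real \<Rightarrow> real \<Rightarrow> real \<Rightarrow> real"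
  assumes "a > b" and "b > 0"
    and "center_fun h"
    and "is_ellipse (locus a b h)"
    and "\<forall>P2 P3. periodic3 a b (a, 0) P2 P3 \<longrightarrow> center_defined h (a, 0) P2 P3"
    and "\<forall>P2 P3. periodic3 a b (0, b) P2 P3 \<longrightarrow> center_defined h (0, b) P2 P3"
  shows "\<exists>\<alpha> \<beta>. \<alpha> > 0 \<and> \<beta> > 0 \<and>
    (\<forall>P2 P3. periodic3 a b (a, 0) P2 P3 \<longrightarrow>
        center h (a, 0) P2 P3 = (\<alpha>, 0) \<or> center h (a, 0) P2 P3 = (- \<alpha>, 0)) \<and>
    (\<forall>P2 P3. periodic3 a b (0, b) P2 P3 \<longrightarrow>
        center h (0, b) P2 P3 = (0, \<beta>) \<or> center h (0, b) P2 P3 = (0, - \<beta>)) \<and>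
    locus a b h = {(x, y). x\<^sup>2 / \<alpha>\<^sup>2 + y\<^sup>2 / \<beta>\<^sup>2 = 1}"
proof -
  have "a > 0"
    using assms(1,2) by simp
  obtain \<alpha> \<beta> where "\<alpha> > 0" "\<beta> > 0"
    and L: "locus a b h = {(x, y). x\<^sup>2 / \<alpha>\<^sup>2 + y\<^sup>2 / \<beta>\<^sup>2 = 1}"
    using axis_symmetric_ellipse_standard_form[OF assms(4)] locus_axis_symmetric by metis
  have "center h (a, 0) P2 P3 = (\<alpha>, 0) \<or> center h (a, 0) P2 P3 = (- \<alpha>, 0)"
    if per: "periodic3 a b (a, 0) P2 P3" for P2 P3
    using standard_ellipse_x_axis[where \<beta> = \<beta>, OF \<open>\<alpha> > 0\<close> _
        center_at_vertex_on_axis[OF \<open>a > 0\<close> assms(2,3) per]]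
      center_in_locus[OF per assms(5)[rule_format, OF per]] unfolding L by blast
  moreover have "center h (0, b) P2 P3 = (0, \<beta>) \<or> center h (0, b) P2 P3 = (0, - \<beta>)"
    if per: "periodic3 a b (0, b) P2 P3" for P2 P3
    using standard_ellipse_y_axis[where \<alpha> = \<alpha>, OF \<open>\<beta> > 0\<close> _
        center_at_covertex_on_axis[OF \<open>a > 0\<close> assms(2,3) per]]
      center_in_locus[OF per assms(6)[rule_format, OF per]] unfolding L by blast
  ultimately show ?thesis
    using \<open>\<alpha> > 0\<close> \<open>\<beta> > 0\<close> L by blast
qed

end
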